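(* Assume $X\in\mathbb{R}^p$, $C\ge 0$, $T\ge 0$, and let $P_{(X,C)}$ be any given distribution of $(X,C)$. Let $\hat L(\cdot)$ be a lower prediction bound built from observed data $(X_i,C_i,\widetilde T_i)_{i=1}^n$, $\widetilde T_i=\min(T_i,C_i)$, where $(X_i,C_i,T_i)$ are i.i.d. copies of $(X,C,T)$. If $\hat L$ satisfies \[\mathbb{P}\big(T\ge \hat L(X)\mid X=x\big)\ge 1-\alpha\] uniformly for all joint distributions of $(X,C,T)$ with $(X,C)\sim P_{(X,C)}$, then for all such distributions, \[\mathbb{P}(\hat L(x)=0)\ge 1-\alpha\] at almost all points $x$ (with respect to $P_X$) aside from the atoms of $P_X$.
   Context: In the conditional coverage criterion, the probability is over the data used to build $\hat L$ and over a new unit $(X,C,T)$, independent of the data, conditional on $X=x$. $P_X$ denotes the marginal distribution of $X$ under $P_{(X,C)}$. *)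

theory Defs
  imports "HOL-Probability.Probability"
begin

type_synonym 'p obs = "(real ^ 'p) \<times> real \<times> real"
  \<comment> \<open>an observed triple (X_i, C_i, min(T_i, C_i))\<close>

type_synonym 'p dataset = "nat \<Rightarrow> 'p obs"
  \<comment> \<open>a data set, indexed by i < n (element of PiM {..<n})\<close>

definition admissible_joint ::
  "((real ^ 'p) \<times> real) measure \<Rightarrow> ((real ^ 'p) \<times> real \<times> real) measure \<Rightarrow> bool" where
  "admissible_joint PXC \<mu> \<longleftrightarrow>
     prob_space \<mu> \<and> sets \<mu> = sets borel \<and>
     distr \<mu> borel (\<lambda>(x, c, t). (x, c)) = PXC \<and>
     (AE u in \<mu>. snd (snd u) \<ge> 0)"

definition obs_law :: "((real ^ 'p) \<times> real \<times> real) measure \<Rightarrow> 'p obs measure" where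
  "obs_law \<mu> = distr \<mu> borel (\<lambda>(x, c, t). (x, c, min t c))"

definition data_law :: "nat \<Rightarrow> ((real ^ 'p) \<times> real \<times> real) measure \<Rightarrow> 'p dataset measure" where
  "data_law n \<mu> = PiM {..<n} (\<lambda>_. obs_law \<mu>)"

definition full_law :: "nat \<Rightarrow> ((real ^ 'p) \<times> real \<times> real) measure
    \<Rightarrow> ('p dataset \<times> ((real ^ 'p) \<times> real \<times> real)) measure" where
  "full_law n \<mu> = data_law n \<mu> \<Otimes>\<^sub>M \<mu>"

text \<open>Conditional coverage: P(T \<ge> Lhat(X) | X) \<ge> 1 - alpha almost surely, i.e.
  P(T \<ge> Lhat(X) | X = x) \<ge> 1 - alpha for P_X-almost every x, where the probability is
  over the data and the new unit (X, C, T) and conditioning is on the new unit's X.\<close>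
definition cond_coverage ::
  "nat \<Rightarrow> ('p dataset \<Rightarrow> real ^ 'p \<Rightarrow> real) \<Rightarrow> real \<Rightarrow> ((real ^ 'p) \<times> real \<times> real) measure \<Rightarrow> bool" where
  "cond_coverage n Lhat \<alpha> \<mu> \<longleftrightarrow>
     (let M = full_law n \<mu>;
          F = vimage_algebra (space M) (\<lambda>(D, (x, c, t)). x) borel;
          cover = (\<lambda>(D, (x, c, t)). if t \<ge> Lhat D x then 1 else (0::real))
      in AE \<omega> in M. real_cond_exp M F cover \<omega> \<ge> 1 - \<alpha>)"

end

theory Submission
  imports Defs
begin

(* Fix a Borel set B of covariate values and change the law of the unit by setting T := 0 on
   {X \<in> B}. The law of (X, C) is unchanged, so the coverage hypothesis applies to the new law,
   and on {X \<in> B} coverage forces Lhat(data, X) = 0. The new data set coincides with the old one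
   unless some X_i falls in B, which has probability at most n P_X(B). Hence, with
   f(x) = P(Lhat(data, x) = 0),
     (1 - alpha) P_X(B) \<le> int_B f dP_X + n P_X(B)^2   for every Borel set B.
   A set of positive P_X-measure without atoms contains Borel subsets of arbitrarily small
   positive measure, so letting P_X(B) \<rightarrow> 0 inside {f < 1 - alpha - delta} shows that this
   set is P_X-null away from the atoms of P_X. *)

section \<open>Small sets inside the non-atomic part of a measure\<close>

lemma obtain_point_ball_positive:
  fixes M :: "'a::{second_countable_topology, metric_space} measure"
  assumes "finite_measure M" and sets_M: "sets M = sets borel" and A: "A \<in> sets M" and pos: "0 < measure M A"
  obtains x where "x \<in> A" "\<And>r. 0 < r \<Longrightarrow> 0 < measure M (A \<inter> ball x r)"
proof -
  interpret finite_measure M by fact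
  obtain \<B> :: "'a set set" where "countable \<B>" and open_\<B>: "\<And>C. C \<in> \<B> \<Longrightarrow> open C"
    and basis: "\<And>S. open S \<Longrightarrow> \<exists>U. U \<subseteq> \<B> \<and> S = \<Union>U"
    using univ_second_countable by blast
  define Z where "Z = (\<Union>U\<in>{U\<in>\<B>. measure M (A \<inter> U) = 0}. A \<inter> U)"
  have "Z \<in> null_sets M"
    unfolding Z_def using \<open>countable \<B>\<close> A open_\<B> sets_M
    by (intro null_sets_UN') (auto simp: emeasure_eq_measure null_sets_def)
  then have "measure M (A - Z) = measure M A"
    using A by (simp add: measure_Diff_null_set)
  then obtain x where "x \<in> A" "x \<notin> Z"
    using pos by (metis Diff_eq_empty_iff less_irrefl measure_empty subsetI)
  moreover have "0 < measure M (A \<inter> ball x r)" if "0 < r" for r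
  proof -
    obtain U where "U \<subseteq> \<B>" "ball x r = \<Union>U"
      using basis[of "ball x r"] by auto
    then obtain V where V: "V \<in> \<B>" "x \<in> V" "V \<subseteq> ball x r"
      using \<open>0 < r\<close> by (metis Union_iff Union_upper centre_in_ball subsetD)
    then have "measure M (A \<inter> V) \<noteq> 0"
      using \<open>x \<in> A\<close> \<open>x \<notin> Z\<close> by (auto simp: Z_def)
    moreover have "measure M (A \<inter> V) \<le> measure M (A \<inter> ball x r)"
      using V A sets_M open_\<B> by (intro finite_measure_mono) auto
    ultimately show ?thesis
      by (metis measure_nonneg order.not_eq_order_implies_strict order.strict_trans2)
  qed
  ultimately show ?thesis using that by blast
qed

lemma obtain_small_positive_subset:
  fixes M :: "'a::{second_countable_topology, metric_space} measure"
  assumes "finite_measure M" and sets_M: "sets M = sets borel" and A: "A \<in> sets M" and pos: "0 < measure M A"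
    and no_atoms: "\<And>x. x \<in> A \<Longrightarrow> measure M {x} = 0" and "0 < \<epsilon>"
  obtains B where "B \<in> sets M" "B \<subseteq> A" "0 < measure M B" "measure M B < \<epsilon>"
proof -
  interpret finite_measure M by fact
  obtain x where "x \<in> A" and ball_pos: "\<And>r. 0 < r \<Longrightarrow> 0 < measure M (A \<inter> ball x r)"
    using obtain_point_ball_positive[OF \<open>finite_measure M\<close> sets_M A pos] by blast
  define S where "S = (\<lambda>k::nat. A \<inter> ball x (1 / Suc k))"
  have S_sets: "S k \<in> sets M" for k
    unfolding S_def using A sets_M by auto
  have "decseq S"
    unfolding S_def decseq_def
    by (intro allI impI Int_mono order.refl subset_ball) (simp add: frac_le)
  moreover have "(\<Inter>k. S k) = {x}"
  proof -
    have "y = x" if "\<And>k. dist x y < 1 / Suc k" for y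
      using that by (metis dist_nz less_irrefl order.strict_trans nat_approx_posE)
    then show ?thesis using \<open>x \<in> A\<close> by (auto simp: S_def)
  qed
  ultimately have "(\<lambda>k. measure M (S k)) \<longlonglongrightarrow> 0"
    using finite_Lim_measure_decseq[of S] S_sets no_atoms[OF \<open>x \<in> A\<close>] by auto
  then obtain k where "measure M (S k) < \<epsilon>"
    using \<open>0 < \<epsilon>\<close> by (metis order_tendstoD(2) eventually_sequentially order.refl)
  moreover have "0 < measure M (S k)"
    unfolding S_def by (rule ball_pos) simp
  ultimately show ?thesis
    using that[of "S k"] S_sets by (auto simp: S_def)
qed

lemma non_atoms_in_sets:
  fixes M :: "'a::t1_space measure"
  assumes "finite_measure M" and "sets M = sets borel"
  shows "{x \<in> space M. measure M {x} = 0} \<in> sets M"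
proof -
  have "{x. measure M {x} \<noteq> 0} \<in> sets M"
    by (rule sets.countable[OF _ finite_measure.countable_support[OF assms(1)]]) (simp add: assms(2))
  then have "space M - {x. measure M {x} \<noteq> 0} \<in> sets M"
    by blast
  also have "space M - {x. measure M {x} \<noteq> 0} = {x \<in> space M. measure M {x} = 0}"
    by blast
  finally show ?thesis .
qed

lemma null_sets_non_atoms_below_of_set_integral_bound:
  fixes M :: "'a::{second_countable_topology, metric_space} measure" and f :: "'a \<Rightarrow> real"
  assumes "finite_measure M" and sets_M: "sets M = sets borel" and f: "integrable M f"
    and bound: "\<And>B. B \<in> sets M \<Longrightarrow> \<beta> * measure M B \<le> (LINT x:B|M. f x) + K * (measure M B)\<^sup>2"
    and "0 < \<delta>"
  shows "{x \<in> space M. measure M {x} = 0 \<and> f x < \<beta> - \<delta>} \<in> null_sets M" (is "?A \<in> _")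
proof (rule ccontr)
  interpret finite_measure M by fact
  have [measurable]: "f \<in> borel_measurable M"
    using f by (rule borel_measurable_integrable)
  have "?A = {x \<in> space M. measure M {x} = 0} \<inter> {x \<in> space M. f x < \<beta> - \<delta>}"
    by blast
  also have "\<dots> \<in> sets M"
    by (intro sets.Int[OF non_atoms_in_sets[OF assms(1,2)]]) measurable
  finally have A: "?A \<in> sets M" .
  assume "?A \<notin> null_sets M"
  then have "0 < measure M ?A"
    using A by (simp add: null_sets_def emeasure_eq_measure zero_less_measure_iff)
  moreover have "measure M {x} = 0" if "x \<in> ?A" for x
    using that by simp
  moreover have "0 < \<delta> / (\<bar>K\<bar> + 1)"
    using \<open>0 < \<delta>\<close> by simp
  ultimately obtain B where B: "B \<in> sets M" "B \<subseteq> ?A" "0 < measure M B" "measure M B < \<delta> / (\<bar>K\<bar> + 1)"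
    by (rule obtain_small_positive_subset[OF assms(1) sets_M A])
  define b where "b = measure M B"
  have "set_integrable M B f" "set_integrable M B (\<lambda>_. \<beta> - \<delta>)"
    unfolding set_integrable_def by (intro integrable_mult_indicator[OF B(1)] f integrable_const)+
  then have "(LINT x:B|M. f x) \<le> (LINT x:B|M. \<beta> - \<delta>)"
    by (rule set_integral_mono) (use B(2) in auto)
  also have "\<dots> = b * (\<beta> - \<delta>)"
    using B by (simp add: b_def set_integral_const emeasure_eq_measure)
  finally have "\<beta> * b \<le> b * (\<beta> - \<delta>) + K * b\<^sup>2"
    using bound[OF B(1)] by (simp add: b_def)
  then have "\<delta> * b \<le> K * b * b"
    by (simp add: algebra_simps power2_eq_square)
  then have "\<delta> \<le> K * b"
    using B(3) by (simp add: b_def mult_le_cancel_right_pos)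
  also have "\<dots> \<le> \<bar>K\<bar> * b"
    using B(3) by (simp add: b_def mult_right_mono)
  also have "\<dots> < (\<bar>K\<bar> + 1) * b"
    using B(3) by (simp add: b_def distrib_right)
  also have "\<dots> < \<delta>"
    using B(4) by (simp add: b_def pos_less_divide_eq mult.commute)
  finally have "\<delta> < \<delta>" .
  then show False
    by simp
qed

lemma AE_ge_of_set_integral_lower_bound:
  fixes M :: "'a::{second_countable_topology, metric_space} measure" and f :: "'a \<Rightarrow> real"
  assumes "finite_measure M" and "sets M = sets borel" and "integrable M f"
    and "\<And>B. B \<in> sets M \<Longrightarrow> \<beta> * measure M B \<le> (LINT x:B|M. f x) + K * (measure M B)\<^sup>2"
  shows "AE x in M. measure M {x} = 0 \<longrightarrow> \<beta> \<le> f x"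
proof (rule AE_I')
  let ?A = "\<lambda>k::nat. {x \<in> space M. measure M {x} = 0 \<and> f x < \<beta> - 1 / Suc k}"
  show "(\<Union>k. ?A k) \<in> null_sets M"
    by (intro null_sets_UN null_sets_non_atoms_below_of_set_integral_bound[OF assms] divide_pos_pos) simp_all
  show "{x \<in> space M. \<not> (measure M {x} = 0 \<longrightarrow> \<beta> \<le> f x)} \<subseteq> (\<Union>k. ?A k)"
  proof
    fix x assume x: "x \<in> {x \<in> space M. \<not> (measure M {x} = 0 \<longrightarrow> \<beta> \<le> f x)}"
    then obtain k :: nat where "1 / Suc k < \<beta> - f x"
      using nat_approx_posE[of "\<beta> - f x"] by auto
    with x have "x \<in> ?A k"
      by auto
    then show "x \<in> (\<Union>k. ?A k)"
      by blast
  qed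
qed

section \<open>Integrals, product measures and couplings\<close>

lemma (in finite_measure_subalgebra) set_integral_ge_of_real_cond_exp_ge:
  fixes f :: "'a \<Rightarrow> real"
  assumes f: "integrable M f" and ge: "AE x in M. \<beta> \<le> real_cond_exp M F f x" and A: "A \<in> sets F"
  shows "\<beta> * measure M A \<le> (LINT x:A|M. f x)"
proof -
  have A_M: "A \<in> sets M"
    using A subalg by (auto simp: subalgebra_def)
  have "\<beta> * measure M A = (LINT x:A|M. \<beta>)"
    using A_M by (simp add: set_integral_const emeasure_finite)
  also have "\<dots> \<le> (LINT x:A|M. real_cond_exp M F f x)"
  proof (rule set_integral_mono_AE)
    show "set_integrable M A (\<lambda>_. \<beta>)" "set_integrable M A (real_cond_exp M F f)"
      unfolding set_integrable_def
      by (intro integrable_mult_indicator[OF A_M] integrable_const real_cond_exp_int(1)[OF f])+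
    show "AE x\<in>A in M. \<beta> \<le> real_cond_exp M F f x"
      using ge by auto
  qed
  also have "\<dots> = (LINT x:A|M. f x)"
    using real_cond_exp_intA[OF f A] by simp
  finally show ?thesis .
qed

lemma (in finite_measure) set_integral_le_add_const:
  fixes f g :: "'a \<Rightarrow> real"
  assumes B: "B \<in> sets M" and f: "integrable M f" and g: "integrable M g"
    and le: "\<And>x. x \<in> B \<Longrightarrow> f x \<le> g x + c"
  shows "(LINT x:B|M. f x) \<le> (LINT x:B|M. g x) + c * measure M B"
proof -
  have g_int: "set_integrable M B g" and c_int: "set_integrable M B (\<lambda>_. c)"
    unfolding set_integrable_def by (rule integrable_mult_indicator[OF B g], rule integrable_mult_indicator[OF B])
      simp
  have "set_integrable M B f" "set_integrable M B (\<lambda>x. g x + c)"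
    unfolding set_integrable_def
    by (rule integrable_mult_indicator[OF B f], rule integrable_mult_indicator[OF B])
      (simp add: g)
  then have "(LINT x:B|M. f x) \<le> (LINT x:B|M. g x + c)"
    by (rule set_integral_mono) (rule le)
  also have "\<dots> = (LINT x:B|M. g x) + c * measure M B"
    using B by (simp add: set_integral_add[OF g_int c_int] set_integral_const emeasure_eq_measure)
  finally show ?thesis .
qed

lemma measure_PiM_distr_le:
  fixes M :: "'a measure"
  assumes "prob_space M" "finite I" and g: "g \<in> M \<rightarrow>\<^sub>M M" and S: "S \<in> sets M"
    and g_id: "\<And>y. y \<in> space M \<Longrightarrow> y \<notin> S \<Longrightarrow> g y = y" and E: "E \<in> sets (PiM I (\<lambda>_. M))"
  shows "measure (PiM I (\<lambda>_. distr M M g)) E \<le> measure (PiM I (\<lambda>_. M)) E + card I * measure M S"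
proof -
  interpret product_prob_space "\<lambda>_. M" I
    using \<open>prob_space M\<close> by (simp add: product_prob_space_def product_prob_space_axioms_def
        product_sigma_finite_def prob_space_imp_sigma_finite)
  let ?P = "PiM I (\<lambda>_. M)"
  define Hit where "Hit = (\<lambda>i. {\<omega> \<in> space ?P. \<omega> i \<in> S})"
  have Hit_sets: "Hit i \<in> sets ?P" if "i \<in> I" for i
    unfolding Hit_def using that S by measurable
  have compose_g: "compose I g \<in> ?P \<rightarrow>\<^sub>M ?P"
    unfolding compose_def using g by measurable
  have "PiM I (\<lambda>_. distr M M g) = distr ?P ?P (compose I g)"
    using \<open>prob_space M\<close> g
    by (intro distr_PiM_finite_prob_space'[symmetric] \<open>finite I\<close> prob_space.prob_space_distr) auto
  then have "measure (PiM I (\<lambda>_. distr M M g)) E = measure ?P (compose I g -` E \<inter> space ?P)"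
    using E compose_g by (simp add: measure_distr)
  also have "\<dots> \<le> measure ?P (E \<union> (\<Union>i\<in>I. Hit i))"
  proof (rule finite_measure_mono)
    show "compose I g -` E \<inter> space ?P \<subseteq> E \<union> (\<Union>i\<in>I. Hit i)"
    proof
      fix \<omega> assume \<omega>: "\<omega> \<in> compose I g -` E \<inter> space ?P"
      show "\<omega> \<in> E \<union> (\<Union>i\<in>I. Hit i)"
      proof (cases "\<exists>i\<in>I. \<omega> i \<in> S")
        case True
        with \<omega> show ?thesis by (auto simp: Hit_def)
      next
        case False
        with \<omega> have "compose I g \<omega> = \<omega>"
          by (auto simp: compose_def space_PiM PiE_def extensional_def Pi_iff fun_eq_iff intro!: g_id)
        with \<omega> show ?thesis by auto
      qed
    qed
    show "E \<union> (\<Union>i\<in>I. Hit i) \<in> sets ?P"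
      using E Hit_sets \<open>finite I\<close> by blast
  qed
  also have "\<dots> \<le> measure ?P E + (\<Sum>i\<in>I. measure ?P (Hit i))"
    using E Hit_sets \<open>finite I\<close>
    by (intro order.trans[OF measure_Un_le] add_left_mono measure_UNION_le) auto
  also have "(\<Sum>i\<in>I. measure ?P (Hit i)) = card I * measure M S"
    using S by (simp add: Hit_def measure_def emeasure_PiM_Collect_single)
  finally show ?thesis .
qed

lemma measurable_measure_slice:
  fixes P :: "'d \<Rightarrow> 'x \<Rightarrow> bool"
  assumes "sigma_finite_measure D" and P: "Measurable.pred (D \<Otimes>\<^sub>M N) (\<lambda>(d, x). P d x)"
  shows "(\<lambda>x. measure D {d \<in> space D. P d x}) \<in> borel_measurable N"
proof -
  interpret sigma_finite_measure D by fact
  define Q where "Q = {z \<in> space (N \<Otimes>\<^sub>M D). P (snd z) (fst z)}"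
  have "Q \<in> sets (N \<Otimes>\<^sub>M D)"
    unfolding Q_def using P by measurable
  then have "(\<lambda>x. enn2real (emeasure D (Pair x -` Q))) \<in> borel_measurable N"
    by (intro borel_measurable_enn2real measurable_emeasure_Pair)
  moreover have "Pair x -` Q = {d \<in> space D. P d x}" if "x \<in> space N" for x
    using that by (auto simp: Q_def space_pair_measure)
  ultimately show ?thesis
    by (subst measurable_cong[where g="\<lambda>x. enn2real (emeasure D (Pair x -` Q))"]) (simp_all add: measure_def)
qed

lemma integrable_measure_slice:
  fixes P :: "'d \<Rightarrow> 'x \<Rightarrow> bool"
  assumes "prob_space D" "finite_measure N" and P: "Measurable.pred (D \<Otimes>\<^sub>M N) (\<lambda>(d, x). P d x)"
  shows "integrable N (\<lambda>x. measure D {d \<in> space D. P d x})"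
  using assms(2) measurable_measure_slice[OF prob_space_imp_sigma_finite[OF assms(1)] P]
  by (intro finite_measure.integrable_const_bound[where B=1]) (simp_all add: prob_space.prob_le_1[OF assms(1)])

lemma measure_pair_slice_eq_set_integral:
  fixes P :: "'d \<Rightarrow> 'x \<Rightarrow> bool"
  assumes "prob_space D" "prob_space \<mu>" and X[measurable]: "X \<in> \<mu> \<rightarrow>\<^sub>M N"
    and P[measurable]: "Measurable.pred (D \<Otimes>\<^sub>M N) (\<lambda>(d, x). P d x)" and B[measurable]: "B \<in> sets N"
  shows "measure (D \<Otimes>\<^sub>M \<mu>) {\<omega> \<in> space (D \<Otimes>\<^sub>M \<mu>). X (snd \<omega>) \<in> B \<and> P (fst \<omega>) (X (snd \<omega>))}
    = (LINT x:B|distr \<mu> N X. measure D {d \<in> space D. P d x})"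
proof -
  interpret pair_prob_space D \<mu>
    using assms(1,2) by (simp add: pair_prob_space_def pair_sigma_finite_def prob_space_imp_sigma_finite)
  interpret N: prob_space "distr \<mu> N X"
    using X by (rule M2.prob_space_distr)
  define h where "h = (\<lambda>x. measure D {d \<in> space D. P d x})"
  define E where "E = {\<omega> \<in> space (D \<Otimes>\<^sub>M \<mu>). X (snd \<omega>) \<in> B \<and> P (fst \<omega>) (X (snd \<omega>))}"
  have h[measurable]: "h \<in> borel_measurable N"
    unfolding h_def using P by (intro measurable_measure_slice) unfold_locales
  have "E \<in> sets (D \<Otimes>\<^sub>M \<mu>)"
    unfolding E_def by measurable
  then have "emeasure (D \<Otimes>\<^sub>M \<mu>) E = (\<integral>\<^sup>+u. emeasure D ((\<lambda>d. (d, u)) -` E) \<partial>\<mu>)"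
    by (rule emeasure_pair_measure_alt2)
  also have "\<dots> = (\<integral>\<^sup>+u. ennreal (indicator B (X u) * h (X u)) \<partial>\<mu>)"
  proof (rule nn_integral_cong)
    fix u assume "u \<in> space \<mu>"
    then have "(\<lambda>d. (d, u)) -` E = (if X u \<in> B then {d \<in> space D. P d (X u)} else {})"
      by (auto simp: E_def space_pair_measure)
    then show "emeasure D ((\<lambda>d. (d, u)) -` E) = ennreal (indicator B (X u) * h (X u))"
      by (simp add: h_def M1.emeasure_eq_measure)
  qed
  also have "\<dots> = (\<integral>\<^sup>+x. ennreal (indicator B x * h x) \<partial>distr \<mu> N X)"
    by (intro nn_integral_distr[symmetric] X) (unfold measurable_distr_eq1, measurable)
  also have "\<dots> = ennreal (LINT x:B|distr \<mu> N X. h x)"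
    unfolding set_lebesgue_integral_def real_scaleR_def
    by (intro nn_integral_eq_integral N.integrable_const_bound[where B=1])
      (auto simp: h_def indicator_def)
  finally have "emeasure (D \<Otimes>\<^sub>M \<mu>) E = ennreal (LINT x:B|distr \<mu> N X. h x)" .
  moreover have "0 \<le> (LINT x:B|distr \<mu> N X. h x)"
    unfolding set_lebesgue_integral_def by (simp add: h_def)
  ultimately show ?thesis
    unfolding E_def h_def by (simp add: P.emeasure_eq_measure)
qed

section \<open>The censored-data model\<close>

lemma borel_prod3:
  "(borel :: ('a::second_countable_topology \<times> 'b::second_countable_topology
      \<times> 'c::second_countable_topology) measure) = borel \<Otimes>\<^sub>M borel \<Otimes>\<^sub>M borel"
  by (simp add: borel_prod)

lemma sets_eq_borel_prod3:
  fixes \<mu> :: "('a::second_countable_topology \<times> 'b::second_countable_topology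
      \<times> 'c::second_countable_topology) measure"
  shows "sets \<mu> = sets borel \<Longrightarrow> sets \<mu> = sets (borel \<Otimes>\<^sub>M borel \<Otimes>\<^sub>M borel)"
  by (simp add: borel_prod3)

lemma borel_measurable_fst [measurable]:
  "(fst :: 'a::second_countable_topology \<times> 'b::second_countable_topology \<Rightarrow> 'a) \<in> borel \<rightarrow>\<^sub>M borel"
  by (intro borel_measurable_continuous_onI continuous_on_fst continuous_on_id)

lemma measurable_censor [measurable]:
  "(\<lambda>(x, c, t). (x, c, min t c)) \<in> borel \<rightarrow>\<^sub>M (borel :: ((real ^ 'p) \<times> real \<times> real) measure)"
  unfolding borel_prod3 by measurable

lemma measurable_zero_censored_time [measurable]:
  assumes [measurable]: "B \<in> sets borel"
  shows "(\<lambda>(x, c, s). (x, c, if x \<in> B then min 0 c else s))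
    \<in> borel \<rightarrow>\<^sub>M (borel :: ((real ^ 'p) \<times> real \<times> real) measure)"
  unfolding borel_prod3 by measurable

lemma sets_obs_law [simp]: "sets (obs_law \<mu>) = sets borel"
  by (simp add: obs_law_def)

lemma space_obs_law [simp]: "space (obs_law \<mu>) = UNIV"
  using sets_eq_imp_space_eq[OF sets_obs_law] by simp

lemma prob_space_obs_law:
  assumes "prob_space \<mu>" and "sets \<mu> = sets borel"
  shows "prob_space (obs_law \<mu>)"
proof -
  have [measurable_cong]: "sets \<mu> = sets (borel \<Otimes>\<^sub>M borel \<Otimes>\<^sub>M borel)"
    using assms(2) by (simp add: borel_prod3)
  show ?thesis
    unfolding obs_law_def using assms(1) by (rule prob_space.prob_space_distr) (simp add: borel_prod3)
qed

lemma distr_fst_obs_law: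
  fixes \<mu> :: "((real ^ 'p) \<times> real \<times> real) measure"
  assumes "sets \<mu> = sets borel"
  shows "distr (obs_law \<mu>) borel fst = distr \<mu> borel fst"
proof -
  have "(\<lambda>(x, c, t). (x, c, min t c)) \<in> \<mu> \<rightarrow>\<^sub>M (borel :: ((real ^ 'p) \<times> real \<times> real) measure)"
    unfolding measurable_cong_sets[OF assms refl] by measurable
  with borel_measurable_fst
  have "distr (obs_law \<mu>) borel fst = distr \<mu> borel (fst \<circ> (\<lambda>(x, c, t). (x, c, min t c)))"
    unfolding obs_law_def by (rule distr_distr)
  also have "\<dots> = distr \<mu> borel fst"
    by (intro distr_cong) auto
  finally show ?thesis .
qed

lemma sets_data_law: "sets (data_law n \<mu>) = sets (PiM {..<n} (\<lambda>_. borel))"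
  unfolding data_law_def by (rule sets_PiM_cong) simp_all

lemma prob_space_data_law:
  "prob_space \<mu> \<Longrightarrow> sets \<mu> = sets borel \<Longrightarrow> prob_space (data_law n \<mu>)"
  unfolding data_law_def by (intro prob_space_PiM prob_space_obs_law)

lemma pair_prob_space_data_law:
  "prob_space \<mu> \<Longrightarrow> sets \<mu> = sets borel \<Longrightarrow> pair_prob_space (data_law n \<mu>) \<mu>"
  by (simp add: pair_prob_space_def pair_sigma_finite_def prob_space_imp_sigma_finite prob_space_data_law)

lemma measure_full_law_fst_vimage:
  assumes "prob_space \<mu>" "sets \<mu> = sets borel" and B[measurable]: "B \<in> sets borel"
  shows "measure (full_law n \<mu>) {\<omega> \<in> space (full_law n \<mu>). fst (snd \<omega>) \<in> B} = measure (distr \<mu> borel fst) B"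
proof -
  interpret pair_prob_space "data_law n \<mu>" \<mu>
    using assms(1,2) by (rule pair_prob_space_data_law)
  note [measurable_cong] = sets_eq_borel_prod3[OF assms(2)]
  interpret X: prob_space "distr \<mu> borel fst"
    by (rule M2.prob_space_distr) measurable
  have "measure (full_law n \<mu>) {\<omega> \<in> space (full_law n \<mu>). fst (snd \<omega>) \<in> B \<and> True}
      = (LINT x:B|distr \<mu> borel fst. measure (data_law n \<mu>) {d \<in> space (data_law n \<mu>). True})"
    unfolding full_law_def
    by (rule measure_pair_slice_eq_set_integral[OF M1.prob_space_axioms M2.prob_space_axioms]) measurable
  then show ?thesis
    by (simp add: set_integral_const X.emeasure_eq_measure M1.prob_space)
qed

lemma integrable_prob_Lhat_zero:
  fixes \<mu> :: "((real ^ 'p) \<times> real \<times> real) measure" and Lhat :: "'p dataset \<Rightarrow> real ^ 'p \<Rightarrow> real"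
  assumes "prob_space \<mu>" "sets \<mu> = sets borel" "finite_measure N" and sets_N: "sets N = sets borel"
    and L[measurable]: "(\<lambda>(D, x). Lhat D x) \<in> borel_measurable (PiM {..<n} (\<lambda>_. borel) \<Otimes>\<^sub>M borel)"
  shows "integrable N (\<lambda>x. measure (data_law n \<mu>) {D \<in> space (data_law n \<mu>). Lhat D x = 0})"
proof -
  note [measurable_cong] = sets_data_law sets_N
  show ?thesis
    by (intro integrable_measure_slice prob_space_data_law assms(1-3)) measurable
qed

lemma cond_coverage_imp_coverage_on:
  fixes \<mu> :: "((real ^ 'p) \<times> real \<times> real) measure" and Lhat :: "'p dataset \<Rightarrow> real ^ 'p \<Rightarrow> real"
  assumes "prob_space \<mu>" and sets_\<mu>: "sets \<mu> = sets borel"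
    and L[measurable]: "(\<lambda>(D, x). Lhat D x) \<in> borel_measurable (PiM {..<n} (\<lambda>_. borel) \<Otimes>\<^sub>M borel)"
    and "cond_coverage n Lhat \<alpha> \<mu>" and B[measurable]: "B \<in> sets borel"
  shows "(1 - \<alpha>) * measure (distr \<mu> borel fst) B \<le> measure (full_law n \<mu>)
    {\<omega> \<in> space (full_law n \<mu>). fst (snd \<omega>) \<in> B \<and> Lhat (fst \<omega>) (fst (snd \<omega>)) \<le> snd (snd (snd \<omega>))}"
    (is "_ \<le> measure ?M ?E")
proof -
  interpret pair_prob_space "data_law n \<mu>" \<mu>
    using assms(1,2) by (rule pair_prob_space_data_law)
  interpret M: prob_space ?M
    unfolding full_law_def by (rule P.prob_space_axioms)
  note [measurable_cong] = sets_eq_borel_prod3[OF sets_\<mu>] sets_data_law[of n \<mu>]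
  have [measurable_cong]: "sets ?M = sets (data_law n \<mu> \<Otimes>\<^sub>M \<mu>)"
    by (simp add: full_law_def)
  \<comment> \<open>X and cover are written exactly as in cond_coverage_def, so that the hypothesis applies verbatim.\<close>
  define X :: "'p dataset \<times> (real ^ 'p) \<times> real \<times> real \<Rightarrow> real ^ 'p"
    where "X = (\<lambda>(D, (x, c, t)). x)"
  define cover :: "'p dataset \<times> (real ^ 'p) \<times> real \<times> real \<Rightarrow> real"
    where "cover = (\<lambda>(D, (x, c, t)). if t \<ge> Lhat D x then 1 else 0)"
  define F where "F = vimage_algebra (space ?M) X borel"
  define A where "A = X -` B \<inter> space ?M"
  have X_eq: "X = (\<lambda>\<omega>. fst (snd \<omega>))"
    by (auto simp: X_def fun_eq_iff)
  have cover_eq: "indicator A \<omega> * cover \<omega> = indicator ?E \<omega>" if "\<omega> \<in> space ?M" for \<omega>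
    using that by (cases \<omega>) (auto simp: A_def X_def cover_def indicator_def)
  have X_meas[measurable]: "X \<in> ?M \<rightarrow>\<^sub>M borel"
    unfolding X_eq by measurable
  interpret finite_measure_subalgebra ?M F
    using X_meas
    by (intro finite_measure_subalgebra.intro finite_measure_subalgebra_axioms.intro M.finite_measure_axioms)
      (auto simp: subalgebra_def F_def measurable_iff_sets)
  have "integrable ?M cover"
    unfolding cover_def
    by (intro M.integrable_const_bound[where B=1]) (auto split: prod.split, measurable)
  moreover have "AE \<omega> in ?M. 1 - \<alpha> \<le> real_cond_exp ?M F cover \<omega>"
    using assms(4) by (simp add: cond_coverage_def Let_def F_def cover_def X_def)
  moreover have "A \<in> sets F"
    unfolding A_def F_def by (rule in_vimage_algebra[OF B])
  ultimately have "(1 - \<alpha>) * measure ?M A \<le> (LINT \<omega>:A|?M. cover \<omega>)"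
    by (rule set_integral_ge_of_real_cond_exp_ge)
  also have "(LINT \<omega>:A|?M. cover \<omega>) = (LINT \<omega>|?M. indicator ?E \<omega>)"
    unfolding set_lebesgue_integral_def real_scaleR_def by (rule Bochner_Integration.integral_cong) (simp_all add: cover_eq)
  also have "\<dots> = measure ?M ?E"
    by simp
  also have "A = {\<omega> \<in> space ?M. fst (snd \<omega>) \<in> B}"
    by (auto simp: A_def X_eq)
  also have "measure ?M \<dots> = measure (distr \<mu> borel fst) B"
    using assms(1,2) B by (rule measure_full_law_fst_vimage)
  finally show ?thesis .
qed

definition zero_time_on ::
  "(real ^ 'p) set \<Rightarrow> ((real ^ 'p) \<times> real \<times> real) measure \<Rightarrow> ((real ^ 'p) \<times> real \<times> real) measure" where
  "zero_time_on B \<mu> = distr \<mu> borel (\<lambda>(x, c, t). (x, c, if x \<in> B then 0 else t))"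

lemma sets_zero_time_on [simp]: "sets (zero_time_on B \<mu>) = sets borel"
  by (simp add: zero_time_on_def)

lemma measurable_zero_time [measurable]:
  assumes [measurable]: "B \<in> sets borel"
  shows "(\<lambda>(x, c, t). (x, c, if x \<in> B then 0 else t))
    \<in> borel \<rightarrow>\<^sub>M (borel :: ((real ^ 'p) \<times> real \<times> real) measure)"
  unfolding borel_prod3 by measurable

lemma prob_space_zero_time_on:
  assumes "prob_space \<mu>" "sets \<mu> = sets borel" "B \<in> sets borel"
  shows "prob_space (zero_time_on B \<mu>)"
  unfolding zero_time_on_def using assms
  by (intro prob_space.prob_space_distr) (simp_all add: measurable_cong_sets[OF assms(2) refl])

lemma distr_zero_time_on:
  fixes f :: "(real ^ 'p) \<times> real \<times> real \<Rightarrow> 'b"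
  assumes "sets \<mu> = sets borel" "B \<in> sets borel" and f: "f \<in> borel \<rightarrow>\<^sub>M N"
    and f_indep: "\<And>x c t. f (x, c, if x \<in> B then 0 else t) = f (x, c, t)"
  shows "distr (zero_time_on B \<mu>) N f = distr \<mu> N f"
proof -
  have "distr (zero_time_on B \<mu>) N f = distr \<mu> N (f \<circ> (\<lambda>(x, c, t). (x, c, if x \<in> B then 0 else t)))"
    unfolding zero_time_on_def using assms by (intro distr_distr) (simp_all add: measurable_cong_sets[OF assms(1) refl])
  also have "\<dots> = distr \<mu> N f"
    using f_indep by (intro distr_cong) auto
  finally show ?thesis .
qed

lemma admissible_joint_zero_time_on:
  assumes "admissible_joint PXC \<mu>" and B: "B \<in> sets borel"
  shows "admissible_joint PXC (zero_time_on B \<mu>)"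
proof -
  have \<mu>: "prob_space \<mu>" "sets \<mu> = sets borel" "distr \<mu> borel (\<lambda>(x, c, t). (x, c)) = PXC"
    and T_nonneg: "AE u in \<mu>. 0 \<le> snd (snd u)"
    using assms(1) by (auto simp: admissible_joint_def)
  have "(\<lambda>(x, c, t::real). (x, c)) \<in> borel \<rightarrow>\<^sub>M (borel :: ((real ^ 'p) \<times> real) measure)"
    unfolding borel_prod[symmetric] by measurable
  then have "distr (zero_time_on B \<mu>) borel (\<lambda>(x, c, t). (x, c)) = PXC"
    using \<mu> B by (subst distr_zero_time_on) auto
  moreover have "AE u in zero_time_on B \<mu>. 0 \<le> snd (snd u)"
  proof -
    have "AE u in \<mu>. 0 \<le> snd (snd ((\<lambda>(x, c, t). (x, c, if x \<in> B then 0 else t)) u))"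
      using T_nonneg by eventually_elim (auto split: prod.split)
    moreover have "{u \<in> space borel. 0 \<le> snd (snd u)} \<in> sets (borel :: ((real ^ 'p) \<times> real \<times> real) measure)"
      unfolding borel_prod3 by measurable
    ultimately show ?thesis
      unfolding zero_time_on_def using B
      by (subst AE_distr_iff) (simp_all add: measurable_cong_sets[OF \<mu>(2) refl])
  qed
  ultimately show ?thesis
    using prob_space_zero_time_on[OF \<mu>(1,2) B] by (simp add: admissible_joint_def)
qed

lemma obs_law_zero_time_on:
  fixes \<mu> :: "((real ^ 'p) \<times> real \<times> real) measure"
  assumes sets_\<mu>: "sets \<mu> = sets borel" and B[measurable]: "B \<in> sets borel"
  shows "obs_law (zero_time_on B \<mu>)
    = distr (obs_law \<mu>) (obs_law \<mu>) (\<lambda>(x, c, s). (x, c, if x \<in> B then min 0 c else s))"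
proof -
  define h :: "(real ^ 'p) \<times> real \<times> real \<Rightarrow> _" where "h = (\<lambda>(x, c, t). (x, c, if x \<in> B then 0 else t))"
  define k :: "(real ^ 'p) \<times> real \<times> real \<Rightarrow> _" where "k = (\<lambda>(x, c, t). (x, c, min t c))"
  define g :: "(real ^ 'p) \<times> real \<times> real \<Rightarrow> _" where "g = (\<lambda>(x, c, s). (x, c, if x \<in> B then min 0 c else s))"
  have h: "h \<in> \<mu> \<rightarrow>\<^sub>M borel" and k: "k \<in> borel \<rightarrow>\<^sub>M borel" "k \<in> \<mu> \<rightarrow>\<^sub>M borel"
    and g: "g \<in> borel \<rightarrow>\<^sub>M borel"
    unfolding h_def k_def g_def measurable_cong_sets[OF sets_\<mu> refl] by measurable
  have "obs_law (zero_time_on B \<mu>) = distr (distr \<mu> borel h) borel k"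
    unfolding obs_law_def zero_time_on_def h_def k_def ..
  also have "\<dots> = distr \<mu> borel (k \<circ> h)"
    using k(1) h by (rule distr_distr)
  also have "\<dots> = distr \<mu> borel (g \<circ> k)"
    by (intro distr_cong) (auto simp: h_def k_def g_def)
  also have "\<dots> = distr (distr \<mu> borel k) borel g"
    using g k(2) by (rule distr_distr[symmetric])
  also have "\<dots> = distr (obs_law \<mu>) (obs_law \<mu>) g"
    unfolding obs_law_def k_def by (intro distr_cong) simp_all
  finally show ?thesis
    unfolding g_def .
qed

lemma measure_data_law_zero_time_on_le:
  fixes \<mu> :: "((real ^ 'p) \<times> real \<times> real) measure"
  assumes "prob_space \<mu>" and sets_\<mu>: "sets \<mu> = sets borel" and B[measurable]: "B \<in> sets borel"
    and E: "E \<in> sets (PiM {..<n} (\<lambda>_. borel))"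
  shows "measure (data_law n (zero_time_on B \<mu>)) E
    \<le> measure (data_law n \<mu>) E + n * measure (distr \<mu> borel fst) B"
proof -
  define g :: "(real ^ 'p) \<times> real \<times> real \<Rightarrow> _" where "g = (\<lambda>(x, c, s). (x, c, if x \<in> B then min 0 c else s))"
  have fst_B: "fst -` B \<in> sets (obs_law \<mu>)"
    using measurable_sets[OF borel_measurable_fst B] by simp
  have "measure (data_law n (zero_time_on B \<mu>)) E = measure (PiM {..<n} (\<lambda>_. distr (obs_law \<mu>) (obs_law \<mu>) g)) E"
    using sets_\<mu> B by (simp add: data_law_def obs_law_zero_time_on g_def)
  also have "\<dots> \<le> measure (data_law n \<mu>) E + card {..<n} * measure (obs_law \<mu>) (fst -` B)"
    unfolding data_law_def
  proof (rule measure_PiM_distr_le[OF prob_space_obs_law[OF assms(1,2)] _ _ fst_B])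
    show "g \<in> obs_law \<mu> \<rightarrow>\<^sub>M obs_law \<mu>"
      unfolding g_def measurable_cong_sets[OF sets_obs_law sets_obs_law] by measurable
    show "E \<in> sets (PiM {..<n} (\<lambda>_. obs_law \<mu>))"
      using E sets_data_law[of n \<mu>] by (simp add: data_law_def)
  qed (auto simp: g_def)
  also have "measure (obs_law \<mu>) (fst -` B) = measure (distr \<mu> borel fst) B"
    unfolding distr_fst_obs_law[OF sets_\<mu>, symmetric]
    by (subst measure_distr) (simp_all add: measurable_cong_sets[OF sets_obs_law refl])
  finally show ?thesis
    by simp
qed

lemma positive_time_null_zero_time_on:
  fixes \<mu> :: "((real ^ 'p) \<times> real \<times> real) measure"
  assumes sets_\<mu>: "sets \<mu> = sets borel" and B[measurable]: "B \<in> sets borel"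
  shows "{u. fst u \<in> B \<and> snd (snd u) \<noteq> 0} \<in> null_sets (zero_time_on B \<mu>)"
proof -
  have "Measurable.pred (borel :: ((real ^ 'p) \<times> real \<times> real) measure) (\<lambda>u. fst u \<in> B \<and> snd (snd u) \<noteq> 0)"
    unfolding borel_prod3 by measurable
  then have Z: "{u. fst u \<in> B \<and> snd (snd u) \<noteq> 0} \<in> sets (borel :: ((real ^ 'p) \<times> real \<times> real) measure)"
    by (simp add: pred_def)
  have "emeasure (zero_time_on B \<mu>) {u. fst u \<in> B \<and> snd (snd u) \<noteq> 0}
      = emeasure \<mu> ((\<lambda>(x, c, t). (x, c, if x \<in> B then 0 else t)) -` {u. fst u \<in> B \<and> snd (snd u) \<noteq> 0}
          \<inter> space \<mu>)"
    unfolding zero_time_on_def using Z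
    by (intro emeasure_distr) (simp_all add: measurable_cong_sets[OF sets_\<mu> refl])
  also have "(\<lambda>(x, c, t). (x, c, if x \<in> B then 0 else t)) -` {u. fst u \<in> B \<and> snd (snd u) \<noteq> 0} = {}"
    by auto
  finally show ?thesis
    using Z by (simp add: null_sets_def)
qed

lemma measure_covered_le_measure_zero_bound:
  fixes \<mu> :: "((real ^ 'p) \<times> real \<times> real) measure" and Lhat :: "'p dataset \<Rightarrow> real ^ 'p \<Rightarrow> real"
  assumes "prob_space \<mu>" and sets_\<mu>: "sets \<mu> = sets borel"
    and L[measurable]: "(\<lambda>(D, x). Lhat D x) \<in> borel_measurable (PiM {..<n} (\<lambda>_. borel) \<Otimes>\<^sub>M borel)"
    and L_nonneg: "\<And>D x. Lhat D x \<ge> 0" and B[measurable]: "B \<in> sets borel"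
  shows "measure (full_law n (zero_time_on B \<mu>)) {\<omega> \<in> space (full_law n (zero_time_on B \<mu>)).
      fst (snd \<omega>) \<in> B \<and> Lhat (fst \<omega>) (fst (snd \<omega>)) \<le> snd (snd (snd \<omega>))}
    \<le> measure (full_law n (zero_time_on B \<mu>)) {\<omega> \<in> space (full_law n (zero_time_on B \<mu>)).
      fst (snd \<omega>) \<in> B \<and> Lhat (fst \<omega>) (fst (snd \<omega>)) = 0}"
proof -
  let ?M = "full_law n (zero_time_on B \<mu>)"
  let ?Cov = "{\<omega> \<in> space ?M. fst (snd \<omega>) \<in> B \<and> Lhat (fst \<omega>) (fst (snd \<omega>)) \<le> snd (snd (snd \<omega>))}"
  let ?Zero = "{\<omega> \<in> space ?M. fst (snd \<omega>) \<in> B \<and> Lhat (fst \<omega>) (fst (snd \<omega>)) = 0}"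
  let ?D = "data_law n (zero_time_on B \<mu>)" and ?Z = "{u. fst u \<in> B \<and> snd (snd u) \<noteq> 0}"
  interpret pair_prob_space ?D "zero_time_on B \<mu>"
    using prob_space_zero_time_on[OF assms(1,2) B] by (intro pair_prob_space_data_law) simp_all
  have M_eq: "?M = ?D \<Otimes>\<^sub>M zero_time_on B \<mu>"
    by (simp add: full_law_def)
  note [measurable_cong] = sets_eq_borel_prod3[OF sets_zero_time_on] sets_data_law
  have E0: "?Zero \<in> sets ?M"
    unfolding M_eq by measurable
  have null: "space ?D \<times> ?Z \<in> null_sets ?M"
    unfolding M_eq using positive_time_null_zero_time_on[OF sets_\<mu> B] by (intro M2.times_in_null_sets2) simp_all
  have "?Cov \<subseteq> ?Zero \<union> space ?D \<times> ?Z"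
  proof
    fix \<omega> assume "\<omega> \<in> ?Cov"
    then show "\<omega> \<in> ?Zero \<union> space ?D \<times> ?Z"
      using L_nonneg[of "fst \<omega>" "fst (snd \<omega>)"]
      by (cases "snd (snd (snd \<omega>)) = 0") (auto simp: M_eq space_pair_measure)
  qed
  then have "measure ?M ?Cov \<le> measure ?M (?Zero \<union> space ?D \<times> ?Z)"
    using sets.Un[OF E0 null_setsD2[OF null]] unfolding M_eq by (rule P.finite_measure_mono)
  also have "\<dots> = measure ?M ?Zero"
    using E0 null by (rule measure_Un_null_set)
  finally show ?thesis .
qed

lemma zero_time_on_coverage_bound:
  fixes \<mu> :: "((real ^ 'p) \<times> real \<times> real) measure" and Lhat :: "'p dataset \<Rightarrow> real ^ 'p \<Rightarrow> real"
  assumes "prob_space \<mu>" and sets_\<mu>: "sets \<mu> = sets borel"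
    and L[measurable]: "(\<lambda>(D, x). Lhat D x) \<in> borel_measurable (PiM {..<n} (\<lambda>_. borel) \<Otimes>\<^sub>M borel)"
    and L_nonneg: "\<And>D x. Lhat D x \<ge> 0" and B[measurable]: "B \<in> sets borel"
    and cov: "cond_coverage n Lhat \<alpha> (zero_time_on B \<mu>)"
  shows "(1 - \<alpha>) * measure (distr \<mu> borel fst) B
    \<le> (LINT x:B|distr \<mu> borel fst. measure (data_law n \<mu>) {D \<in> space (data_law n \<mu>). Lhat D x = 0})
      + n * (measure (distr \<mu> borel fst) B)\<^sup>2"
proof -
  define \<mu>' where "\<mu>' = zero_time_on B \<mu>"
  define \<nu> where "\<nu> = distr \<mu> borel fst"
  define prob_zero where "prob_zero = (\<lambda>\<mu> x. measure (data_law n \<mu>) {D \<in> space (data_law n \<mu>). Lhat D x = 0})"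
  have \<mu>': "prob_space \<mu>'" "sets \<mu>' = sets borel"
    unfolding \<mu>'_def using prob_space_zero_time_on[OF assms(1,2) B] by simp_all
  have \<nu>: "distr \<mu>' borel fst = \<nu>"
    unfolding \<mu>'_def \<nu>_def using sets_\<mu> B by (intro distr_zero_time_on) auto
  interpret \<nu>: prob_space \<nu>
    unfolding \<nu>_def using assms(1) by (rule prob_space.prob_space_distr) (simp add: measurable_cong_sets[OF sets_\<mu> refl])
  have B_\<nu>: "B \<in> sets \<nu>"
    by (simp add: \<nu>_def)
  have prob_zero_integrable: "integrable \<nu> (prob_zero \<mu>)" if "prob_space \<mu>" "sets \<mu> = sets borel" for \<mu>
    unfolding prob_zero_def using that \<nu>.finite_measure_axioms
    by (rule integrable_prob_Lhat_zero) (simp_all add: \<nu>_def L)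
  have "(1 - \<alpha>) * measure \<nu> B \<le> measure (full_law n \<mu>') {\<omega> \<in> space (full_law n \<mu>').
      fst (snd \<omega>) \<in> B \<and> Lhat (fst \<omega>) (fst (snd \<omega>)) \<le> snd (snd (snd \<omega>))}"
    using cond_coverage_imp_coverage_on[OF \<mu>' L cov[folded \<mu>'_def] B] by (simp add: \<nu>)
  also have "\<dots> \<le> measure (full_law n \<mu>') {\<omega> \<in> space (full_law n \<mu>').
      fst (snd \<omega>) \<in> B \<and> Lhat (fst \<omega>) (fst (snd \<omega>)) = 0}"
    unfolding \<mu>'_def using assms(1,2) L L_nonneg B by (rule measure_covered_le_measure_zero_bound)
  also have "\<dots> = (LINT x:B|\<nu>. prob_zero \<mu>' x)"
    unfolding full_law_def prob_zero_def \<nu>[symmetric] using sets_data_law[of n \<mu>']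
    by (intro measure_pair_slice_eq_set_integral prob_space_data_law \<mu>')
      (simp_all add: measurable_cong_sets[OF \<mu>'(2) refl])
  also have "\<dots> \<le> (LINT x:B|\<nu>. prob_zero \<mu> x) + n * measure \<nu> B * measure \<nu> B"
    using B_\<nu> prob_zero_integrable[OF \<mu>'] prob_zero_integrable[OF assms(1,2)]
  proof (rule \<nu>.set_integral_le_add_const)
    fix x
    have "{D \<in> space (PiM {..<n} (\<lambda>_. borel)). Lhat D x = 0} \<in> sets (PiM {..<n} (\<lambda>_. borel))"
      by measurable
    from measure_data_law_zero_time_on_le[OF assms(1,2) B this]
    show "prob_zero \<mu>' x \<le> prob_zero \<mu> x + n * measure \<nu> B"
      unfolding prob_zero_def \<mu>'_def \<nu>_def sets_eq_imp_space_eq[OF sets_data_law] .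
  qed
  finally show ?thesis
    unfolding \<nu>_def prob_zero_def by (simp add: power2_eq_square)
qed

lemma distr_fst_admissible_joint:
  fixes \<mu> :: "((real ^ 'p) \<times> real \<times> real) measure"
  assumes "admissible_joint PXC \<mu>"
  shows "distr PXC borel fst = distr \<mu> borel fst"
proof -
  have \<mu>: "sets \<mu> = sets borel" "distr \<mu> borel (\<lambda>(x, c, t). (x, c)) = PXC"
    using assms by (auto simp: admissible_joint_def)
  have "(\<lambda>(x, c, t::real). (x, c)) \<in> \<mu> \<rightarrow>\<^sub>M (borel :: ((real ^ 'p) \<times> real) measure)"
    unfolding measurable_cong_sets[OF \<mu>(1) refl] borel_prod[symmetric] by measurable
  with borel_measurable_fst
  have "distr PXC borel fst = distr \<mu> borel (fst \<circ> (\<lambda>(x, c, t). (x, c)))"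
    unfolding \<mu>(2)[symmetric] by (rule distr_distr)
  also have "\<dots> = distr \<mu> borel fst"
    by (intro distr_cong) auto
  finally show ?thesis .
qed

theorem theorem5:
  fixes PXC :: "((real ^ 'p) \<times> real) measure"
    and n :: nat
    and Lhat :: "'p dataset \<Rightarrow> real ^ 'p \<Rightarrow> real"
    and \<alpha> :: real
  assumes "prob_space PXC" and "sets PXC = sets borel"
    and "AE u in PXC. snd u \<ge> 0"
    and "0 < \<alpha>" and "\<alpha> < 1"
    and "(\<lambda>(D, x). Lhat D x) \<in> borel_measurable (PiM {..<n} (\<lambda>_. borel) \<Otimes>\<^sub>M borel)"
    and "\<And>D x. Lhat D x \<ge> 0"
    and "\<And>\<mu>. admissible_joint PXC \<mu> \<Longrightarrow> cond_coverage n Lhat \<alpha> \<mu>"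
  shows "\<And>\<mu>. admissible_joint PXC \<mu> \<Longrightarrow>
           (AE x in distr PXC borel fst.
              measure (distr PXC borel fst) {x} = 0 \<longrightarrow>
              measure (data_law n \<mu>) {D \<in> space (data_law n \<mu>). Lhat D x = 0} \<ge> 1 - \<alpha>)"
proof -
  note L = assms(6) and L_nonneg = assms(7) and coverage = assms(8)
  fix \<mu> assume adm: "admissible_joint PXC \<mu>"
  then have \<mu>: "prob_space \<mu>" "sets \<mu> = sets borel"
    by (auto simp: admissible_joint_def)
  interpret \<nu>: prob_space "distr \<mu> borel fst"
    using \<mu>(1) by (rule prob_space.prob_space_distr) (simp add: measurable_cong_sets[OF \<mu>(2) refl])
  show "AE x in distr PXC borel fst. measure (distr PXC borel fst) {x} = 0 \<longrightarrow>
      measure (data_law n \<mu>) {D \<in> space (data_law n \<mu>). Lhat D x = 0} \<ge> 1 - \<alpha>"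
    unfolding distr_fst_admissible_joint[OF adm]
  proof (rule AE_ge_of_set_integral_lower_bound[where K = n])
    show "integrable (distr \<mu> borel fst) (\<lambda>x. measure (data_law n \<mu>) {D \<in> space (data_law n \<mu>). Lhat D x = 0})"
      using \<mu> \<nu>.finite_measure_axioms by (rule integrable_prob_Lhat_zero) (simp_all add: L)
    show "(1 - \<alpha>) * measure (distr \<mu> borel fst) B \<le> (LINT x:B|distr \<mu> borel fst.
        measure (data_law n \<mu>) {D \<in> space (data_law n \<mu>). Lhat D x = 0}) + n * (measure (distr \<mu> borel fst) B)\<^sup>2"
      if "B \<in> sets (distr \<mu> borel fst)" for B
      using that \<mu> L L_nonneg coverage[OF admissible_joint_zero_time_on[OF adm]]
      by (intro zero_time_on_coverage_bound) simp_all
  qed (simp_all add: \<nu>.finite_measure_axioms)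
qed

end
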